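(* Let $(g,n)\neq(0,1),(0,2)$ with $g\ge0,n\ge1$, and write $\vec P_{g,n}(\mu_1,\ldots,\mu_n)=\sum_{a_1,\ldots,a_n\ge0}C_{g,n}(a_1,\ldots,a_n)\mu_1^{a_1}\cdots\mu_n^{a_n}$ (finite sum). Then, substituting $x_i=\frac{z_i-1}{z_i^2}$, \[ F_{g,n}=\sum_{a_1,\ldots,a_n}C_{g,n}(a_1,\ldots,a_n)\prod_{i=1}^nf_{a_i}(z_i). \] In particular $F_{g,n}$ is (the expansion of) a symmetric rational function of $z_1,\ldots,z_n$ with poles only at $z_i=2$, $i=1,\ldots,n$.
   Context: Monotone Hurwitz numbers $\vec H_{g,n}(\mu_1,\ldots,\mu_n)$: with $|\boldsymbol\mu|=\sum\mu_i$ and $m=2g-2+n+|\boldsymbol\mu|$, it is $\frac{1}{|\boldsymbol\mu|!}$ times the number of $m$-tuples of transpositions $(\sigma_1,\ldots,\sigma_m)$ in $S_{|\boldsymbol\mu|}$, with a labelling of the cycles of $\sigma_1\circ\cdots\circ\sigma_m$ by $1,\ldots,n$ so that cycle $i$ has length $\mu_i$, such that the $\sigma_j$ generate a transitive subgroup and, writing $\sigma_j=(a_j\,b_j)$ with $a_j<b_j$, $b_1\le\cdots\le b_m$. Free energy $F_{g,n}(x_1,\ldots,x_n)=\sum_{\mu_i\ge1}\vec H_{g,n}(\boldsymbol\mu)\prod x_i^{\mu_i}$. Known polynomiality (Goulden–Guay-Paquet–Novak): $\vec H_{g,n}(\boldsymbol\mu)=\prod_i\binom{2\mu_i}{\mu_i}\cdot\vec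 P_{g,n}(\boldsymbol\mu)$ where, for $(g,n)\neq(0,1),(0,2)$, $\vec P_{g,n}$ is a symmetric polynomial with rational coefficients of degree $3g-3+n$. The variables are related by $x=\frac{z-1}{z^2}$ with $z=\frac{1-\sqrt{1-4x}}{2x}$ (so $z=1$ at $x=0$). Auxiliary functions: $f_a(z)=\sum_{\mu\ge1}\binom{2\mu}{\mu}\mu^ax^\mu=\big(-\frac{z(z-1)}{z-2}\frac{\partial}{\partial z}\big)^a\frac{2-2z}{z-2}$. *)

theory Defs
  imports "HOL-Analysis.Analysis" "HOL-Combinatorics.Transposition" "HOL-Library.FuncSet"
begin

text \<open>Permutations of the ground set {0..<d} are represented as functions nat => nat
  (fixing everything outside {0..<d}). A transposition (a b) with a < b is the pair (a,b).\<close>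

definition transp_of :: "nat \<times> nat \<Rightarrow> nat \<Rightarrow> nat" where
  "transp_of t = Transposition.transpose (fst t) (snd t)"

definition transp_prod :: "(nat \<times> nat) list \<Rightarrow> nat \<Rightarrow> nat" where
  "transp_prod ts = foldr (\<circ>) (map transp_of ts) id"

text \<open>The subgroup generated by a set of transpositions (transpositions are involutions,
  so the generated monoid is the generated group).\<close>
inductive_set gen_perms :: "(nat \<Rightarrow> nat) set \<Rightarrow> (nat \<Rightarrow> nat) set" for T where
  gen_id: "id \<in> gen_perms T"
| gen_step: "t \<in> T \<Longrightarrow> p \<in> gen_perms T \<Longrightarrow> t \<circ> p \<in> gen_perms T"

definition transitive_on :: "(nat \<Rightarrow> nat) set \<Rightarrow> nat \<Rightarrow> bool" where
  "transitive_on G d \<longleftrightarrow> (\<forall>i<d. \<forall>j<d. \<exists>p\<in>G. p i = j)"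

definition monotone_tuples :: "nat \<Rightarrow> nat \<Rightarrow> (nat \<times> nat) list set" where
  "monotone_tuples d m = {ts. length ts = m \<and> (\<forall>t\<in>set ts. fst t < snd t \<and> snd t < d)
       \<and> sorted (map snd ts) \<and> transitive_on (gen_perms (transp_of ` set ts)) d}"

text \<open>Labellings of the cycles of perm by 0..<n (standing for 1..n) such that the cycle
  labelled i has length mu!i: a labelling function on points whose fibre over i is
  exactly one cycle of perm, of size mu!i.\<close>
definition cycle_labellings :: "nat list \<Rightarrow> (nat \<Rightarrow> nat) \<Rightarrow> (nat \<Rightarrow> nat) set" where
  "cycle_labellings mu perm =
     {l \<in> {0..<sum_list mu} \<rightarrow>\<^sub>E {0..<length mu}.
        \<forall>i<length mu. card {x\<in>{0..<sum_list mu}. l x = i} = mu ! i \<and>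
          (\<forall>x\<in>{0..<sum_list mu}. l x = i \<longrightarrow>
             (\<forall>y. (y \<in> {0..<sum_list mu} \<and> l y = i) \<longleftrightarrow> (\<exists>k. (perm ^^ k) x = y)))}"

definition mono_hurwitz :: "nat \<Rightarrow> nat list \<Rightarrow> real" where
  "mono_hurwitz g mu =
     (let d = sum_list mu; m = 2 * g + length mu + d - 2 in
      real (card {(ts, l). ts \<in> monotone_tuples d m \<and> l \<in> cycle_labellings mu (transp_prod ts)})
        / fact d)"

definition comps :: "nat \<Rightarrow> nat list set" where
  "comps n = {mu. length mu = n \<and> (\<forall>i<n. 1 \<le> mu ! i)}"

definition x_of_z :: "real \<Rightarrow> real" where
  "x_of_z z = (z - 1) / z ^ 2"

fun f_aux :: "nat \<Rightarrow> real \<Rightarrow> real" where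
  "f_aux 0 = (\<lambda>z. (2 - 2 * z) / (z - 2))"
| "f_aux (Suc a) = (\<lambda>z. - (z * (z - 1) / (z - 2)) * deriv (f_aux a) z)"

text \<open>Evaluation of a polynomial in n variables given by finitely supported coefficients
  Q (exponent vectors as lists of length n).\<close>
definition mpoly_eval :: "(nat list \<Rightarrow> real) \<Rightarrow> nat \<Rightarrow> (nat \<Rightarrow> real) \<Rightarrow> real" where
  "mpoly_eval Q n z = (\<Sum>e\<in>{e. length e = n \<and> Q e \<noteq> 0}. Q e * (\<Prod>i<n. z i ^ (e ! i)))"

end

theory Submission
  imports Defs "HOL-Computational_Algebra.Polynomial"
begin

text \<open>The series sum_{mu >= 1} binom(2 mu, mu) mu^a x^mu converge absolutely for |x| < 1/4. For a = 0
  it is the binomial series of (1 - 4x)^(-1/2) - 1, which is f_0(z) after x = (z - 1)/z^2, and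
  raising a by one applies x d/dx, i.e. the operator defining f_(a+1). For 2/(1 + sqrt 2) < z < 2
  the substitution lands in |x| < 1/4, so by absolute convergence the n-fold series F_(g,n)
  splits, monomial by monomial of P_(g,n), into products of the f_(a_i)(z_i).

  Each f_a is a polynomial divided by (z - 2)^(2a+1), so a common denominator writes
  F_(g,n) = Num(z) / prod_i (z_i - 2)^N. Hurwitz numbers do not change when the cycles are
  relabelled, so F_(g,n), and hence Num, is symmetric on the interval; averaging Num over all
  permutations of the variables gives a polynomial that is symmetric everywhere and still agrees
  with Num there.\<close>

section \<open>Generating series of weighted central binomial coefficients\<close>

lemma central_binomial_Suc:
  "real (Suc k) * real ((2 * Suc k) choose Suc k) = 2 * (2 * real k + 1) * real ((2 * k) choose k)"
proof -
  have "Suc k * ((2 * Suc k) choose Suc k) = Suc (Suc (2 * k)) * (Suc (2 * k) choose k)"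
    using Suc_times_binomial[of k "Suc (2 * k)"] by simp
  also have "Suc (2 * k) choose k = Suc (2 * k) choose Suc k"
    using binomial_symmetric[of "Suc k" "Suc (2 * k)"] by simp
  also have "Suc (Suc (2 * k)) * \<dots> = 2 * (Suc (2 * k) * ((2 * k) choose k))"
    using Suc_times_binomial_eq[of "2 * k" k] by (simp add: algebra_simps)
  finally have "Suc k * ((2 * Suc k) choose Suc k) = 2 * (Suc (2 * k) * ((2 * k) choose k))" .
  then have "real (Suc k * ((2 * Suc k) choose Suc k)) = real (2 * (Suc (2 * k) * ((2 * k) choose k)))"
    by (simp only:)
  then show ?thesis by (simp add: algebra_simps)
qed

lemma gbinomial_minus_half: "((-1/2 :: real) gchoose k) * (-4) ^ k = real ((2 * k) choose k)"
proof (induction k)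
  case 0
  show ?case by simp
next
  case (Suc k)
  have "real (Suc k) * ((-1/2 :: real) gchoose Suc k) = (-1/2 - real k) * ((-1/2) gchoose k)"
    using gbinomial_mult_1[of "-1/2 :: real" k] by (simp add: algebra_simps)
  then have "real (Suc k) * (((-1/2 :: real) gchoose Suc k) * (-4) ^ Suc k)
      = (-4) * ((-1/2 - real k) * ((-1/2) gchoose k)) * (-4) ^ k"
    by (metis mult.assoc mult.commute power_Suc)
  also have "\<dots> = 2 * (2 * real k + 1) * (((-1/2) gchoose k) * (-4) ^ k)"
    by (simp add: algebra_simps)
  also have "\<dots> = real (Suc k) * real ((2 * Suc k) choose Suc k)"
    using Suc central_binomial_Suc by simp
  finally show ?case
    by (simp only: mult_left_cancel of_nat_eq_0_iff Suc_neq_Zero not_False_eq_True)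
qed

text \<open>The term \<open>k = 0\<close> is set to \<open>0\<close>, matching \<open>\<mu> \<ge> 1\<close> in the free energy; otherwise for
  \<open>a = 0\<close> it would be \<open>0 ^ 0 = 1\<close>.\<close>

definition central_binomial_coeff :: "nat \<Rightarrow> nat \<Rightarrow> real" where
  "central_binomial_coeff a k = (if k = 0 then 0 else real ((2 * k) choose k) * real k ^ a)"

lemma central_binomial_coeff_nonneg: "central_binomial_coeff a k \<ge> 0"
  by (simp add: central_binomial_coeff_def)

lemma central_binomial_coeff_Suc:
  "central_binomial_coeff (Suc a) k = real k * central_binomial_coeff a k"
  by (simp add: central_binomial_coeff_def)

lemma summable_central_binomial_coeff:
  assumes "\<bar>x\<bar> < 1/4"
  shows "summable (\<lambda>k. central_binomial_coeff a k * x ^ k)"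
  using assms
proof (induction a arbitrary: x)
  case 0
  have "norm (central_binomial_coeff 0 k * x ^ k) \<le> (4 * \<bar>x\<bar>) ^ k" for k
  proof -
    have "real ((2 * k) choose k) \<le> 2 ^ (2 * k)"
      by (metis binomial_le_pow2 of_nat_le_iff of_nat_numeral of_nat_power)
    then have "real ((2 * k) choose k) * \<bar>x\<bar> ^ k \<le> 4 ^ k * \<bar>x\<bar> ^ k"
      by (intro mult_right_mono) (simp_all add: power_mult)
    then show ?thesis
      by (simp add: central_binomial_coeff_def abs_mult power_abs power_mult_distrib)
  qed
  moreover have "summable (\<lambda>k. (4 * \<bar>x\<bar>) ^ k)"
    using 0 by (intro summable_geometric) simp
  ultimately show ?case
    using summable_comparison_test'[where N = 0 and f = "\<lambda>k. central_binomial_coeff 0 k * x ^ k"]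
    by simp
next
  case (Suc a)
  have "summable (\<lambda>k. diffs (central_binomial_coeff a) k * x ^ k)"
    by (rule termdiff_converges[where K = "1/4"]) (use Suc in auto)
  then have "summable (\<lambda>k. x * (diffs (central_binomial_coeff a) k * x ^ k))"
    by (rule summable_mult)
  then have "summable (\<lambda>k. central_binomial_coeff (Suc a) (Suc k) * x ^ Suc k)"
    by (simp add: diffs_def central_binomial_coeff_Suc algebra_simps)
  then show ?case
    by (rule summable_Suc_iff[THEN iffD1])
qed

lemma summable_norm_central_binomial_coeff:
  assumes "\<bar>x\<bar> < 1/4"
  shows "summable (\<lambda>k. norm (central_binomial_coeff a k * x ^ k))"
  using summable_central_binomial_coeff[of "\<bar>x\<bar>" a] assms central_binomial_coeff_nonneg[of a]
  by (simp add: abs_mult power_abs)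

definition central_binomial_series :: "nat \<Rightarrow> real \<Rightarrow> real" where
  "central_binomial_series a x = (\<Sum>k. central_binomial_coeff a k * x ^ k)"

lemma central_binomial_series_0:
  assumes "\<bar>x\<bar> < 1/4"
  shows "central_binomial_series 0 x = (1 - 4 * x) powr (-1/2) - 1"
proof -
  have "(\<lambda>k. ((-1/2) gchoose k) * (-4 * x) ^ k) sums (1 + (-4 * x)) powr (-1/2)"
    by (rule gen_binomial_real) (use assms in auto)
  moreover have "((-1/2) gchoose k) * (-4 * x) ^ k = real ((2 * k) choose k) * x ^ k" for k
  proof -
    have "(-4 * x) ^ k = (-4) ^ k * x ^ k"
      by (metis power_mult_distrib)
    then show ?thesis
      using gbinomial_minus_half[of k] by (simp only: mult.assoc[symmetric])
  qed
  ultimately have "(\<lambda>k. real ((2 * k) choose k) * x ^ k) sums (1 - 4 * x) powr (-1/2)"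
    by simp
  from sums_diff[OF this sums_single[of 0 "\<lambda>_. 1"]]
  have "(\<lambda>k. central_binomial_coeff 0 k * x ^ k) sums ((1 - 4 * x) powr (-1/2) - 1)"
    by (rule sums_cong[THEN iffD1, rotated]) (simp add: central_binomial_coeff_def)
  then show ?thesis
    by (simp add: central_binomial_series_def sums_iff)
qed

lemma central_binomial_series_derivative:
  assumes x: "\<bar>x\<bar> < 1/4"
  obtains D where "(central_binomial_series a has_field_derivative D) (at x)"
    and "x * D = central_binomial_series (Suc a) x"
proof
  let ?D = "\<Sum>k. diffs (central_binomial_coeff a) k * x ^ k"
  show "(central_binomial_series a has_field_derivative ?D) (at x)"
    unfolding central_binomial_series_def[abs_def]
    by (rule termdiffs_strong'[where K = "1/4"]) (use x summable_central_binomial_coeff in auto)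
  have "summable (\<lambda>k. diffs (central_binomial_coeff a) k * x ^ k)"
    by (rule termdiff_converges[where K = "1/4"]) (use x summable_central_binomial_coeff in auto)
  then have "x * ?D = (\<Sum>k. central_binomial_coeff (Suc a) (Suc k) * x ^ Suc k)"
    by (simp add: suminf_mult[symmetric] diffs_def central_binomial_coeff_Suc algebra_simps)
  also have "\<dots> = central_binomial_series (Suc a) x"
    using suminf_split_head[OF summable_central_binomial_coeff[OF x, of "Suc a"]]
    by (simp add: central_binomial_series_def central_binomial_coeff_def)
  finally show "x * ?D = central_binomial_series (Suc a) x" .
qed

text \<open>At \<open>z = 2 / (1 + sqrt 2) = 2 sqrt 2 - 2\<close> one has \<open>x_of_z z = -1/4\<close>, and at \<open>z = 2\<close>
  (the pole of the \<open>f_a\<close>) \<open>x_of_z z = 1/4\<close>; in between \<open>\<bar>x_of_z z\<bar> < 1/4\<close>.\<close>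

definition z_domain :: "real set" where
  "z_domain = {2 / (1 + sqrt 2)<..<2}"

lemma z_domain_iff: "z \<in> z_domain \<longleftrightarrow> 2 / (1 + sqrt 2) < z \<and> z < 2"
  by (simp add: z_domain_def)

lemma z_domain_bounds:
  assumes "z \<in> z_domain"
  shows "0 < z" and "2 * sqrt 2 - 2 < z" and "z < 2"
proof -
  have "0 < 1 + sqrt 2"
    by (simp add: add_pos_nonneg)
  moreover have "(2 * sqrt 2 - 2) * (1 + sqrt 2) = 2"
    by (simp add: algebra_simps)
  ultimately have "2 / (1 + sqrt 2) = 2 * sqrt 2 - 2" "0 < 2 / (1 + sqrt 2)"
    by (simp_all add: divide_eq_eq)
  then show "0 < z" "2 * sqrt 2 - 2 < z" "z < 2"
    using assms unfolding z_domain_iff by linarith+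
qed

lemma abs_x_of_z_less:
  assumes "z \<in> z_domain"
  shows "\<bar>x_of_z z\<bar> < 1/4"
proof -
  note z = z_domain_bounds[OF assms]
  have "(2 * sqrt 2) ^ 2 < (z + 2) ^ 2"
    using z(2) by (intro power_strict_mono) auto
  then have "- (z ^ 2) < 4 * (z - 1)"
    by (simp add: power2_eq_square algebra_simps)
  moreover have "0 < (z - 2) ^ 2"
    using z(3) by simp
  then have "4 * (z - 1) < z ^ 2"
    by (simp add: power2_eq_square algebra_simps)
  ultimately have "\<bar>z - 1\<bar> * 4 < z ^ 2"
    by (simp add: abs_if)
  then show ?thesis
    using z(1) by (simp add: x_of_z_def divide_less_eq)
qed

lemma x_of_z_derivative:
  assumes "z \<noteq> 0"
  shows "(x_of_z has_field_derivative (2 - z) / z ^ 3) (at z)"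
proof -
  have "((\<lambda>z. (z - 1) / z ^ 2) has_field_derivative (z ^ 2 - (z - 1) * (2 * z)) / (z ^ 2 * z ^ 2)) (at z)"
    by (rule derivative_eq_intros refl | use assms in simp)+
  moreover have "(z ^ 2 - (z - 1) * (2 * z)) / (z ^ 2 * z ^ 2) = (2 - z) / z ^ 3"
    using assms by (simp add: field_simps power2_eq_square power3_eq_cube)
  ultimately show ?thesis
    by (simp add: x_of_z_def[abs_def])
qed

text \<open>Multiplying the coefficients by \<open>k\<close> is \<open>x d/dx\<close> on the series, which becomes
  \<open>-z (z - 1) / (z - 2) d/dz\<close> under \<open>x = (z - 1) / z\<^sup>2\<close>.\<close>

lemma f_aux_eq_central_binomial_series:
  assumes "z \<in> z_domain"
  shows "f_aux a z = central_binomial_series a (x_of_z z)"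
  using assms
proof (induction a arbitrary: z)
  case 0
  note z = z_domain_bounds[OF 0]
  have "1 - 4 * x_of_z z = ((2 - z) / z) ^ 2"
    using z(1) by (simp add: x_of_z_def field_simps power2_eq_square)
  then have "(1 - 4 * x_of_z z) powr (-1/2) = z / (2 - z)"
    using z(1) z(3) by (simp add: powr_minus powr_half_sqrt)
  then have "central_binomial_series 0 (x_of_z z) = z / (2 - z) - 1"
    using central_binomial_series_0[OF abs_x_of_z_less[OF 0]] by simp
  also have "\<dots> = f_aux 0 z"
    using z(3) by (simp add: field_simps)
  finally show ?case ..
next
  case (Suc a)
  note z = z_domain_bounds[OF Suc.prems]
  obtain D where D: "(central_binomial_series a has_field_derivative D) (at (x_of_z z))"
    and DSuc: "x_of_z z * D = central_binomial_series (Suc a) (x_of_z z)"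
    using central_binomial_series_derivative[OF abs_x_of_z_less[OF Suc.prems]] .
  have "((central_binomial_series a \<circ> x_of_z) has_field_derivative D * ((2 - z) / z ^ 3)) (at z)"
    using DERIV_chain[OF D x_of_z_derivative] z(1) by simp
  then have "(f_aux a has_field_derivative D * ((2 - z) / z ^ 3)) (at z)"
  proof (rule has_field_derivative_transform_within_open)
    show "open z_domain" "z \<in> z_domain"
      using Suc.prems by (simp_all add: z_domain_def)
    show "\<And>y. y \<in> z_domain \<Longrightarrow> (central_binomial_series a \<circ> x_of_z) y = f_aux a y"
      using Suc.IH by simp
  qed
  then have "deriv (f_aux a) z = D * ((2 - z) / z ^ 3)"
    by (rule DERIV_imp_deriv)
  then have "f_aux (Suc a) z = - (z * (z - 1) / (z - 2)) * (D * ((2 - z) / z ^ 3))"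
    by simp
  also have "\<dots> = x_of_z z * D"
  proof -
    have "z \<noteq> 0" "z - 2 \<noteq> 0"
      using z(1) z(3) by auto
    then show ?thesis
      by (simp add: x_of_z_def field_simps power2_eq_square power3_eq_cube)
  qed
  also have "\<dots> = central_binomial_series (Suc a) (x_of_z z)"
    by (rule DSuc)
  finally show ?case .
qed

lemma has_sum_central_binomial_coeff:
  assumes "z \<in> z_domain"
  shows "((\<lambda>k. central_binomial_coeff a k * x_of_z z ^ k) has_sum f_aux a z) {1..}"
    and "(\<lambda>k. norm (central_binomial_coeff a k * x_of_z z ^ k)) summable_on {1..}"
proof -
  note x = abs_x_of_z_less[OF assms]
  have "((\<lambda>k. central_binomial_coeff a k * x_of_z z ^ k) has_sum f_aux a z) UNIV"
    using norm_summable_imp_has_sum[OF summable_norm_central_binomial_coeff[OF x]]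
      summable_sums[OF summable_central_binomial_coeff[OF x]]
    by (simp add: f_aux_eq_central_binomial_series[OF assms] central_binomial_series_def)
  moreover have "((\<lambda>k. central_binomial_coeff a k * x_of_z z ^ k) has_sum f_aux a z) UNIV
      \<longleftrightarrow> ((\<lambda>k. central_binomial_coeff a k * x_of_z z ^ k) has_sum f_aux a z) {1..}"
    by (rule has_sum_cong_neutral) (auto simp: central_binomial_coeff_def not_less_eq_eq)
  ultimately show "((\<lambda>k. central_binomial_coeff a k * x_of_z z ^ k) has_sum f_aux a z) {1..}"
    by simp
  have "(\<lambda>k. norm (central_binomial_coeff a k * x_of_z z ^ k)) summable_on UNIV"
    using norm_summable_imp_has_sum[of "\<lambda>k. norm (central_binomial_coeff a k * x_of_z z ^ k)"]
      summable_norm_central_binomial_coeff[OF x] summable_sums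
    by (auto simp: summable_on_def)
  then show "(\<lambda>k. norm (central_binomial_coeff a k * x_of_z z ^ k)) summable_on {1..}"
    by (rule summable_on_subset_banach) simp
qed

section \<open>Absolutely summable products\<close>

lemma has_sum_sum:
  fixes f :: "'i \<Rightarrow> 'a \<Rightarrow> 'b::topological_comm_monoid_add"
  assumes "finite I" and "\<And>i. i \<in> I \<Longrightarrow> (f i has_sum s i) A"
  shows "((\<lambda>x. \<Sum>i\<in>I. f i x) has_sum (\<Sum>i\<in>I. s i)) A"
  using assms by (induction I rule: finite_induct) (auto intro: has_sum_add)

lemma has_sum_mult_Times:
  fixes u :: "'a \<Rightarrow> 'c::{banach, real_normed_field}" and v :: "'b \<Rightarrow> 'c"
  assumes u: "(u has_sum a) A" "(\<lambda>x. norm (u x)) summable_on A"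
    and v: "(v has_sum b) B" "(\<lambda>y. norm (v y)) summable_on B"
  shows "((\<lambda>(x, y). u x * v y) has_sum a * b) (A \<times> B)"
    and "(\<lambda>(x, y). norm (u x * v y)) summable_on (A \<times> B)"
proof -
  have "(\<lambda>x. norm (u x) * (\<Sum>\<^sub>\<infinity>y\<in>B. norm (v y))) summable_on A"
    using u(2) by (rule summable_on_cmult_left)
  moreover have "(\<Sum>\<^sub>\<infinity>y\<in>B. norm (u x * v y)) = norm (u x) * (\<Sum>\<^sub>\<infinity>y\<in>B. norm (v y))" for x
    by (simp add: norm_mult infsum_cmult_right')
  moreover have "(\<lambda>y. norm (u x * v y)) summable_on B" for x
    using summable_on_cmult_right[OF v(2), of "norm (u x)"] by (simp add: norm_mult)
  moreover have "0 \<le> (\<Sum>\<^sub>\<infinity>y\<in>B. norm (v y))"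
    by (rule infsum_nonneg) simp
  ultimately show abs: "(\<lambda>(x, y). norm (u x * v y)) summable_on (A \<times> B)"
    using Infinite_Sum.abs_summable_on_Sigma_iff[of "\<lambda>(x, y). u x * v y" A "\<lambda>_. B"]
    by (simp add: case_prod_unfold)
  show "((\<lambda>(x, y). u x * v y) has_sum a * b) (A \<times> B)"
  proof (rule has_sum_SigmaI[where g = "\<lambda>x. u x * b"])
    show "((\<lambda>y. case (x, y) of (x, y) \<Rightarrow> u x * v y) has_sum u x * b) B" for x
      using has_sum_cmult_right[OF v(1), of "u x"] by simp
    show "((\<lambda>x. u x * b) has_sum a * b) A"
      by (rule has_sum_cmult_left[OF u(1)])
    show "(\<lambda>(x, y). u x * v y) summable_on A \<times> B"
      using abs_summable_summable[of "\<lambda>(x, y). u x * v y" "A \<times> B"] abs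
      by (simp add: case_prod_unfold)
  qed
qed

lemma lists_length_Suc_image:
  "{xs. set xs \<subseteq> A \<and> length xs = Suc n} = (\<lambda>(x, xs). x # xs) ` (A \<times> {xs. set xs \<subseteq> A \<and> length xs = n})"
  by (auto simp: length_Suc_conv)

lemma has_sum_prod_nth:
  fixes f :: "nat \<Rightarrow> 'a \<Rightarrow> 'c::{banach, real_normed_field}"
  assumes "\<And>i. i < n \<Longrightarrow> (f i has_sum s i) A" and "\<And>i. i < n \<Longrightarrow> (\<lambda>x. norm (f i x)) summable_on A"
  shows "((\<lambda>xs. \<Prod>i<n. f i (xs ! i)) has_sum (\<Prod>i<n. s i)) {xs. set xs \<subseteq> A \<and> length xs = n}"
    and "(\<lambda>xs. norm (\<Prod>i<n. f i (xs ! i))) summable_on {xs. set xs \<subseteq> A \<and> length xs = n}"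
proof -
  let ?L = "\<lambda>n. {xs. set xs \<subseteq> A \<and> length xs = n}"
  have "((\<lambda>xs. \<Prod>i<n. f i (xs ! i)) has_sum (\<Prod>i<n. s i)) (?L n)
    \<and> (\<lambda>xs. norm (\<Prod>i<n. f i (xs ! i))) summable_on ?L n"
    using assms
  proof (induction n arbitrary: f s)
    case 0
    have "?L 0 = {[]}"
      by auto
    then show ?case
      by (simp add: has_sum_finiteI)
  next
    case (Suc n)
    let ?tail = "\<lambda>xs. \<Prod>i<n. f (Suc i) (xs ! i)"
    have inj: "inj_on (\<lambda>(x, xs). x # xs) (A \<times> ?L n)"
      by (auto simp: inj_on_def)
    have split: "(\<lambda>xs. \<Prod>i<Suc n. f i (xs ! i)) \<circ> (\<lambda>(x, xs). x # xs) = (\<lambda>(x, xs). f 0 x * ?tail xs)"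
      and split_norm: "(\<lambda>xs. norm (\<Prod>i<Suc n. f i (xs ! i))) \<circ> (\<lambda>(x, xs). x # xs)
        = (\<lambda>(x, xs). norm (f 0 x * ?tail xs))"
      by (auto simp: prod.lessThan_Suc_shift simp del: prod.lessThan_Suc)
    have tail: "(?tail has_sum (\<Prod>i<n. s (Suc i))) (?L n) \<and> (\<lambda>xs. norm (?tail xs)) summable_on ?L n"
      by (rule Suc.IH) (use Suc.prems in simp_all)
    note prod = has_sum_mult_Times[OF Suc.prems(1,2)[OF zero_less_Suc] tail[THEN conjunct1] tail[THEN conjunct2]]
    have "((\<lambda>xs. \<Prod>i<Suc n. f i (xs ! i)) has_sum (\<Prod>i<Suc n. s i)) (?L (Suc n))"
      unfolding lists_length_Suc_image has_sum_reindex[OF inj] split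
      using prod(1) by (simp add: prod.lessThan_Suc_shift del: prod.lessThan_Suc)
    moreover have "(\<lambda>xs. norm (\<Prod>i<Suc n. f i (xs ! i))) summable_on ?L (Suc n)"
      unfolding lists_length_Suc_image summable_on_reindex[OF inj] split_norm
      by (rule prod(2))
    ultimately show ?case ..
  qed
  then show "((\<lambda>xs. \<Prod>i<n. f i (xs ! i)) has_sum (\<Prod>i<n. s i)) (?L n)"
    and "(\<lambda>xs. norm (\<Prod>i<n. f i (xs ! i))) summable_on ?L n"
    by simp_all
qed

section \<open>The free energy as a combination of the \<open>f\<^sub>a\<close>\<close>

lemma comps_eq_lists: "comps n = {xs. set xs \<subseteq> {1..} \<and> length xs = n}"
  by (auto simp: comps_def set_conv_nth)

lemma has_sum_central_binomial_polynomial: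
  fixes H :: "nat list \<Rightarrow> real" and C :: "nat list \<Rightarrow> real"
  assumes C_fin: "finite {a. length a = n \<and> C a \<noteq> 0}"
    and H: "\<forall>mu\<in>comps n. H mu =
        (\<Prod>i<n. real ((2 * (mu ! i)) choose (mu ! i))) *
        (\<Sum>a\<in>{a. length a = n \<and> C a \<noteq> 0}. C a * (\<Prod>i<n. real (mu ! i) ^ (a ! i)))"
    and z: "\<forall>i<n. z i \<in> z_domain"
  shows "((\<lambda>mu. H mu * (\<Prod>i<n. x_of_z (z i) ^ (mu ! i))) has_sum
      (\<Sum>a\<in>{a. length a = n \<and> C a \<noteq> 0}. C a * (\<Prod>i<n. f_aux (a ! i) (z i)))) (comps n)"
proof -
  define S where "S = {a. length a = n \<and> C a \<noteq> 0}"
  let ?term = "\<lambda>a mu. C a * (\<Prod>i<n. central_binomial_coeff (a ! i) (mu ! i) * x_of_z (z i) ^ (mu ! i))"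
  have "((\<lambda>mu. \<Prod>i<n. central_binomial_coeff (a ! i) (mu ! i) * x_of_z (z i) ^ (mu ! i))
      has_sum (\<Prod>i<n. f_aux (a ! i) (z i))) (comps n)" for a
    unfolding comps_eq_lists using z
    by (intro has_sum_prod_nth has_sum_central_binomial_coeff) auto
  then have "((\<lambda>mu. \<Sum>a\<in>S. ?term a mu) has_sum (\<Sum>a\<in>S. C a * (\<Prod>i<n. f_aux (a ! i) (z i)))) (comps n)"
    using C_fin unfolding S_def by (intro has_sum_sum has_sum_cmult_right) auto
  moreover have "H mu * (\<Prod>i<n. x_of_z (z i) ^ (mu ! i)) = (\<Sum>a\<in>S. ?term a mu)"
    if mu: "mu \<in> comps n" for mu
  proof -
    have "central_binomial_coeff (a ! i) (mu ! i) = real ((2 * (mu ! i)) choose (mu ! i)) * real (mu ! i) ^ (a ! i)"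
      if "i < n" for a i
    proof -
      have "mu ! i \<noteq> 0"
        using mu that by (auto simp: comps_def)
      then show ?thesis
        by (simp add: central_binomial_coeff_def)
    qed
    then show ?thesis
      using H mu unfolding S_def
      by (simp add: sum_distrib_left sum_distrib_right prod.distrib algebra_simps)
  qed
  ultimately show ?thesis
    unfolding S_def by (subst has_sum_cong) auto
qed

section \<open>Relabelling the cycles\<close>

lemma cycle_labellings_PiE:
  "l \<in> cycle_labellings mu perm \<Longrightarrow> l \<in> {0..<sum_list mu} \<rightarrow>\<^sub>E {0..<length mu}"
  by (simp add: cycle_labellings_def)

lemma sum_list_permute_list:
  fixes mu :: "'a::comm_monoid_add list"
  assumes "p permutes {..<length mu}"
  shows "sum_list (permute_list p mu) = sum_list mu"
  by (metis assms mset_permute_list sum_mset_sum_list)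

lemma cycle_labellings_permute_list:
  assumes q: "q permutes {..<length mu}" and l: "l \<in> cycle_labellings mu perm"
  shows "restrict (inv q \<circ> l) {0..<sum_list mu} \<in> cycle_labellings (permute_list q mu) perm"
proof -
  let ?D = "{0..<sum_list mu}" and ?n = "length mu"
  let ?l = "restrict (inv q \<circ> l) ?D"
  have fibre: "x \<in> ?D \<Longrightarrow> ?l x = j \<longleftrightarrow> l x = q j" for x j
    using permutes_inverses[OF q] by auto
  have "?l \<in> ?D \<rightarrow>\<^sub>E {0..<?n}"
    using cycle_labellings_PiE[OF l] permutes_in_image[OF permutes_inv[OF q]] by auto
  moreover have "card {x \<in> ?D. ?l x = j} = permute_list q mu ! j
      \<and> (\<forall>x\<in>?D. ?l x = j \<longrightarrow> (\<forall>y. (y \<in> ?D \<and> ?l y = j) \<longleftrightarrow> (\<exists>k. (perm ^^ k) x = y)))"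
    if j: "j < ?n" for j
  proof -
    have "q j < ?n"
      using permutes_in_image[OF q] j by simp
    then have cycle: "card {x \<in> ?D. l x = q j} = mu ! q j"
        "\<forall>x\<in>?D. l x = q j \<longrightarrow> (\<forall>y. (y \<in> ?D \<and> l y = q j) \<longleftrightarrow> (\<exists>k. (perm ^^ k) x = y))"
      using l by (simp_all add: cycle_labellings_def)
    have iff: "(y \<in> ?D \<and> ?l y = j) \<longleftrightarrow> (y \<in> ?D \<and> l y = q j)" for y
      using fibre by blast
    show ?thesis
    proof
      have "{x \<in> ?D. ?l x = j} = {x \<in> ?D. l x = q j}"
        using iff by blast
      then show "card {x \<in> ?D. ?l x = j} = permute_list q mu ! j"
        using cycle(1) permute_list_nth[OF q j] by simp
      show "\<forall>x\<in>?D. ?l x = j \<longrightarrow> (\<forall>y. (y \<in> ?D \<and> ?l y = j) \<longleftrightarrow> (\<exists>k. (perm ^^ k) x = y))"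
        unfolding iff using cycle(2) fibre by blast
    qed
  qed
  ultimately show ?thesis
    using sum_list_permute_list[OF q] by (simp add: cycle_labellings_def)
qed

text \<open>Composing the labelling of the cycles with \<open>inv p\<close> is a bijection between the configurations
  counted by the two Hurwitz numbers.\<close>

lemma mono_hurwitz_permute_list:
  assumes p: "p permutes {..<length mu}"
  shows "mono_hurwitz g (permute_list p mu) = mono_hurwitz g mu"
proof -
  define mu' where "mu' = permute_list p mu"
  define d where "d = sum_list mu"
  define m where "m = 2 * g + length mu + d - 2"
  have len: "length mu' = length mu" and sum: "sum_list mu' = d"
    using sum_list_permute_list[OF p] by (simp_all add: mu'_def d_def)
  have p': "inv p permutes {..<length mu'}"
    using permutes_inv[OF p] len by simp
  have mu: "permute_list (inv p) mu' = mu"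
    using permute_list_compose[of "inv p" mu p] permutes_inv[OF p] permutes_inv_o(1)[OF p]
    by (simp add: mu'_def)
  define A where "A = {(ts, l). ts \<in> monotone_tuples d m \<and> l \<in> cycle_labellings mu (transp_prod ts)}"
  define A' where "A' = {(ts, l). ts \<in> monotone_tuples d m \<and> l \<in> cycle_labellings mu' (transp_prod ts)}"
  have PiE: "l \<in> {0..<d} \<rightarrow>\<^sub>E {0..<length mu}"
    if "l \<in> cycle_labellings mu perm \<or> l \<in> cycle_labellings mu' perm" for l perm
    using that cycle_labellings_PiE[of l mu perm] cycle_labellings_PiE[of l mu' perm] len sum
    by (auto simp: d_def)
  have restrict_inv: "restrict (inv r \<circ> restrict (r \<circ> l) {0..<d}) {0..<d} = l"
    if "r permutes {..<length mu}" "l \<in> {0..<d} \<rightarrow>\<^sub>E {0..<length mu}" for r l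
    using that permutes_inverses[OF that(1)] by (auto simp: PiE_def extensional_def fun_eq_iff)
  have "bij_betw (\<lambda>(ts, l). (ts, restrict (inv p \<circ> l) {0..<d})) A A'"
  proof (rule bij_betw_byWitness[where f' = "\<lambda>(ts, l). (ts, restrict (p \<circ> l) {0..<d})"])
    show "\<forall>a\<in>A. (\<lambda>(ts, l). (ts, restrict (p \<circ> l) {0..<d})) ((\<lambda>(ts, l). (ts, restrict (inv p \<circ> l) {0..<d})) a) = a"
      using restrict_inv[OF permutes_inv[OF p]] PiE
      by (auto simp: A_def inv_inv_eq[OF permutes_bij[OF p]])
    show "\<forall>a\<in>A'. (\<lambda>(ts, l). (ts, restrict (inv p \<circ> l) {0..<d})) ((\<lambda>(ts, l). (ts, restrict (p \<circ> l) {0..<d})) a) = a"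
      using restrict_inv[OF p] PiE by (auto simp: A'_def)
    show "(\<lambda>(ts, l). (ts, restrict (inv p \<circ> l) {0..<d})) ` A \<subseteq> A'"
      using cycle_labellings_permute_list[OF p] by (auto simp: A_def A'_def mu'_def d_def)
    show "(\<lambda>(ts, l). (ts, restrict (p \<circ> l) {0..<d})) ` A' \<subseteq> A"
      using cycle_labellings_permute_list[OF p'] sum mu inv_inv_eq[OF permutes_bij[OF p]]
      by (auto simp: A_def A'_def)
  qed
  then have "card A' = card A"
    by (simp add: bij_betw_same_card)
  then show ?thesis
    using len sum by (simp add: mono_hurwitz_def Let_def A_def A'_def mu'_def d_def m_def)
qed

lemma has_sum_permute_variables:
  fixes H :: "nat list \<Rightarrow> real" and w :: "nat \<Rightarrow> real"
  assumes p: "p permutes {..<n}"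
    and H: "\<And>mu. mu \<in> comps n \<Longrightarrow> H (permute_list p mu) = H mu"
    and sum: "((\<lambda>mu. H mu * (\<Prod>i<n. w i ^ (mu ! i))) has_sum s) (comps n)"
  shows "((\<lambda>mu. H mu * (\<Prod>i<n. w (p i) ^ (mu ! i))) has_sum s) (comps n)"
proof -
  have p': "inv p permutes {..<n}"
    by (rule permutes_inv[OF p])
  have comps: "permute_list r mu \<in> comps n" if "r permutes {..<n}" "mu \<in> comps n" for r mu
    using that permutes_in_image[OF that(1)] by (auto simp: comps_def permute_list_nth)
  have inverse: "permute_list r (permute_list r' mu) = mu"
    if "r permutes {..<n}" "r' \<circ> r = id" "mu \<in> comps n" for r r' mu
    using permute_list_compose[of r mu r'] that by (simp add: comps_def)
  have "((\<lambda>mu. H mu * (\<Prod>i<n. w i ^ (mu ! i))) has_sum s) (comps n)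
      = ((\<lambda>mu. H mu * (\<Prod>i<n. w (p i) ^ (mu ! i))) has_sum s) (comps n)"
  proof (rule has_sum_reindex_bij_witness[where j = "permute_list p" and i = "permute_list (inv p)"])
    fix mu assume mu: "mu \<in> comps n"
    show "permute_list (inv p) (permute_list p mu) = mu"
      using inverse[OF p' _ mu] permutes_inv_o[OF p] by simp
    show "permute_list p mu \<in> comps n" "permute_list (inv p) mu \<in> comps n"
      using comps[OF p mu] comps[OF p' mu] .
    show "permute_list p (permute_list (inv p) mu) = mu"
      using inverse[OF p _ mu] permutes_inv_o[OF p] by simp
    have "(\<Prod>i<n. w (p i) ^ (permute_list p mu ! i)) = (\<Prod>i<n. w (p i) ^ (mu ! p i))"
      using mu p by (simp add: comps_def permute_list_nth)
    also have "\<dots> = (\<Prod>i<n. w i ^ (mu ! i))"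
      using prod.permute[OF p, of "\<lambda>i. w i ^ (mu ! i)"] by (simp add: o_def)
    finally show "H (permute_list p mu) * (\<Prod>i<n. w (p i) ^ (permute_list p mu ! i))
        = H mu * (\<Prod>i<n. w i ^ (mu ! i))"
      using H[OF mu] by simp
  qed simp
  then show ?thesis
    using sum by simp
qed

section \<open>The \<open>f\<^sub>a\<close> are rational with poles only at \<open>z = 2\<close>\<close>

lemma has_field_derivative_poly_over_power:
  fixes p :: "real poly"
  assumes "z \<noteq> c"
  shows "((\<lambda>z. poly p z / (z - c) ^ k) has_field_derivative
           (poly (pderiv p) z * (z - c) - real k * poly p z) / (z - c) ^ (k + 1)) (at z)"
proof -
  have "((\<lambda>z. poly p z / (z - c) ^ k) has_field_derivative
      (poly (pderiv p) z * (z - c) ^ k - poly p z * (real k * (z - c) ^ (k - 1) * 1)) / ((z - c) ^ k * (z - c) ^ k)) (at z)"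
    using assms by (auto intro!: derivative_eq_intros)
  moreover have "(poly (pderiv p) z * (z - c) ^ k - poly p z * (real k * (z - c) ^ (k - 1) * 1)) / ((z - c) ^ k * (z - c) ^ k)
      = (poly (pderiv p) z * (z - c) - real k * poly p z) / (z - c) ^ (k + 1)"
  proof (cases k)
    case (Suc j)
    define w where "w = z - c"
    have nz: "w ^ j \<noteq> 0"
      using assms by (simp add: w_def)
    have num: "poly (pderiv p) z * w ^ k - poly p z * (real k * w ^ (k - 1) * 1)
        = w ^ j * (poly (pderiv p) z * w - real k * poly p z)"
      by (simp add: Suc algebra_simps)
    have den: "w ^ k * w ^ k = w ^ j * w ^ (k + 1)"
      by (simp add: Suc flip: power_add)
    show ?thesis
      unfolding w_def[symmetric] num den by (rule mult_divide_mult_cancel_left[OF nz])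
  qed (use assms in simp)
  ultimately show ?thesis
    by simp
qed

lemma f_aux_poly_over_power: "\<exists>p. \<forall>z. z \<noteq> 2 \<longrightarrow> f_aux a z = poly p z / (z - 2) ^ (2 * a + 1)"
proof (induction a)
  case 0
  show ?case
    by (rule exI[of _ "[:2, -2:]"]) simp
next
  case (Suc a)
  then obtain p where p: "\<And>z. z \<noteq> 2 \<Longrightarrow> f_aux a z = poly p z / (z - 2) ^ (2 * a + 1)"
    by blast
  define k where "k = 2 * a + 1"
  define q where "q = - ([:0, 1:] * [:-1, 1:] * (pderiv p * [:-2, 1:] - smult (real k) p))"
  have "f_aux (Suc a) z = poly q z / (z - 2) ^ (2 * Suc a + 1)" if z: "z \<noteq> 2" for z
  proof -
    have "(f_aux a has_field_derivative
        (poly (pderiv p) z * (z - 2) - real k * poly p z) / (z - 2) ^ (k + 1)) (at z)"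
      by (rule has_field_derivative_transform_within_open[OF has_field_derivative_poly_over_power[OF z],
            where S = "- {2}"]) (use z p k_def in auto)
    then have "f_aux (Suc a) z
        = - (z * (z - 1) / (z - 2)) * ((poly (pderiv p) z * (z - 2) - real k * poly p z) / (z - 2) ^ (k + 1))"
      by (simp add: DERIV_imp_deriv)
    also have "\<dots> = - (z * (z - 1) * (poly (pderiv p) z * (z - 2) - real k * poly p z)) / (z - 2) ^ (k + 2)"
    proof -
      have "(z - 2) ^ (k + 2) = (z - 2) * (z - 2) ^ (k + 1)"
        by simp
      then show ?thesis
        by (simp only: minus_divide_left times_divide_times_eq mult_minus_left)
    qed
    also have "\<dots> = poly q z / (z - 2) ^ (k + 2)"
    proof -
      have "poly q z = - (z * (z - 1) * (poly (pderiv p) z * (z - 2) - real k * poly p z))"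
        by (simp add: q_def algebra_simps)
      then show ?thesis
        by (simp only:)
    qed
    finally show ?thesis
      by (simp add: k_def)
  qed
  then show ?case
    by blast
qed

lemma f_aux_common_denominator:
  assumes "2 * a + 1 \<le> N"
  shows "\<exists>p. \<forall>z. z \<noteq> 2 \<longrightarrow> f_aux a z = poly p z / (z - 2) ^ N"
proof -
  obtain p where p: "\<And>z. z \<noteq> 2 \<Longrightarrow> f_aux a z = poly p z / (z - 2) ^ (2 * a + 1)"
    using f_aux_poly_over_power by blast
  have "f_aux a z = poly (p * [:-2, 1:] ^ (N - (2 * a + 1))) z / (z - 2) ^ N" if "z \<noteq> 2" for z
  proof -
    have "(z - 2) ^ N = (z - 2) ^ (2 * a + 1) * (z - 2) ^ (N - (2 * a + 1))"
      by (simp only: le_add_diff_inverse[OF assms] flip: power_add)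
    then show ?thesis
      using p[OF that] that by simp
  qed
  then show ?thesis
    by blast
qed

section \<open>Polynomial functions of several variables\<close>

definition is_mpoly :: "nat \<Rightarrow> ((nat \<Rightarrow> real) \<Rightarrow> real) \<Rightarrow> bool" where
  "is_mpoly n F \<longleftrightarrow> (\<exists>Q. finite {e. length e = n \<and> Q e \<noteq> 0} \<and> F = mpoly_eval Q n)"

lemma mpoly_eval_superset:
  assumes "finite S" and "{e. length e = n \<and> Q e \<noteq> 0} \<subseteq> S" and "S \<subseteq> {e. length e = n}"
  shows "mpoly_eval Q n z = (\<Sum>e\<in>S. Q e * (\<Prod>i<n. z i ^ (e ! i)))"
  unfolding mpoly_eval_def by (rule sum.mono_neutral_left) (use assms in auto)

lemma is_mpoly_monomial: "is_mpoly n (\<lambda>z. \<Prod>i<n. z i ^ h i)"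
proof -
  define e where "e = map h [0..<n]"
  have supp: "{e'. length e' = n \<and> (if e' = e then 1 else 0 :: real) \<noteq> 0} = {e}"
    by (auto simp: e_def)
  then have "mpoly_eval (\<lambda>e'. if e' = e then 1 else 0) n = (\<lambda>z. \<Prod>i<n. z i ^ h i)"
    by (simp add: mpoly_eval_def e_def fun_eq_iff)
  then show ?thesis
    unfolding is_mpoly_def using supp by (intro exI[of _ "\<lambda>e'. if e' = e then 1 else 0"]) simp
qed

lemma is_mpoly_add:
  assumes "is_mpoly n F" and "is_mpoly n G"
  shows "is_mpoly n (\<lambda>z. F z + G z)"
proof -
  obtain Q1 Q2 where Q: "finite {e. length e = n \<and> Q1 e \<noteq> 0}" "finite {e. length e = n \<and> Q2 e \<noteq> 0}"
    and F: "F = mpoly_eval Q1 n" and G: "G = mpoly_eval Q2 n"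
    using assms unfolding is_mpoly_def by blast
  define S where "S = {e. length e = n \<and> Q1 e \<noteq> 0} \<union> {e. length e = n \<and> Q2 e \<noteq> 0}"
  have S: "finite S" "S \<subseteq> {e. length e = n}"
    using Q by (auto simp: S_def)
  have sub: "{e. length e = n \<and> Q1 e + Q2 e \<noteq> 0} \<subseteq> S"
    by (auto simp: S_def)
  have "F z + G z = mpoly_eval (\<lambda>e. Q1 e + Q2 e) n z" for z
    unfolding F G using S sub
    by (subst (1 2 3) mpoly_eval_superset[where S = S]) (auto simp: S_def sum.distrib algebra_simps)
  moreover have "finite {e. length e = n \<and> Q1 e + Q2 e \<noteq> 0}"
    using S(1) sub by (rule finite_subset[rotated])
  ultimately show ?thesis
    unfolding is_mpoly_def fun_eq_iff by (intro exI[of _ "\<lambda>e. Q1 e + Q2 e"]) simp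
qed

lemma is_mpoly_cmult:
  assumes "is_mpoly n F"
  shows "is_mpoly n (\<lambda>z. c * F z)"
proof -
  obtain Q where Q: "finite {e. length e = n \<and> Q e \<noteq> 0}" and F: "F = mpoly_eval Q n"
    using assms unfolding is_mpoly_def by blast
  have sub: "{e. length e = n \<and> c * Q e \<noteq> 0} \<subseteq> {e. length e = n \<and> Q e \<noteq> 0}"
    by auto
  have "c * F z = mpoly_eval (\<lambda>e. c * Q e) n z" for z
    unfolding F using Q sub
    by (subst (1 2) mpoly_eval_superset[where S = "{e. length e = n \<and> Q e \<noteq> 0}"])
       (auto simp: sum_distrib_left algebra_simps)
  moreover have "finite {e. length e = n \<and> c * Q e \<noteq> 0}"
    using Q sub by (rule finite_subset[rotated])
  ultimately show ?thesis
    unfolding is_mpoly_def fun_eq_iff by (intro exI[of _ "\<lambda>e. c * Q e"]) simp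
qed

lemma is_mpoly_sum:
  assumes "finite I" and "\<And>a. a \<in> I \<Longrightarrow> is_mpoly n (F a)"
  shows "is_mpoly n (\<lambda>z. \<Sum>a\<in>I. F a z)"
  using assms
proof (induction I rule: finite_induct)
  case empty
  have "is_mpoly n (\<lambda>z. 0 * (\<Prod>i<n. z i ^ 0))"
    by (rule is_mpoly_cmult[OF is_mpoly_monomial])
  then show ?case
    by simp
next
  case (insert a I)
  then show ?case
    by (simp add: is_mpoly_add)
qed

lemma is_mpoly_expand:
  assumes "is_mpoly n F"
  obtains S Q where "finite S" "F = (\<lambda>z. \<Sum>e\<in>S. Q e * (\<Prod>i<n. z i ^ (e ! i)))"
  using assms unfolding is_mpoly_def mpoly_eval_def by blast

lemma is_mpoly_mult:
  assumes "is_mpoly n F" and "is_mpoly n G"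
  shows "is_mpoly n (\<lambda>z. F z * G z)"
proof -
  obtain S1 Q1 where S1: "finite S1" and F: "F = (\<lambda>z. \<Sum>e\<in>S1. Q1 e * (\<Prod>i<n. z i ^ (e ! i)))"
    by (rule is_mpoly_expand[OF assms(1)])
  obtain S2 Q2 where S2: "finite S2" and G: "G = (\<lambda>z. \<Sum>e\<in>S2. Q2 e * (\<Prod>i<n. z i ^ (e ! i)))"
    by (rule is_mpoly_expand[OF assms(2)])
  have "(\<lambda>z. F z * G z) = (\<lambda>z. \<Sum>e1\<in>S1. \<Sum>e2\<in>S2. Q1 e1 * Q2 e2 * (\<Prod>i<n. z i ^ (e1 ! i + e2 ! i)))"
    unfolding F G sum_product by (intro ext sum.cong refl) (simp add: power_add prod.distrib mult_ac)
  then show ?thesis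
    using S1 S2 by (simp only:) (intro is_mpoly_sum is_mpoly_cmult is_mpoly_monomial)
qed

lemma is_mpoly_prod:
  assumes "finite I" and "\<And>a. a \<in> I \<Longrightarrow> is_mpoly n (F a)"
  shows "is_mpoly n (\<lambda>z. \<Prod>a\<in>I. F a z)"
  using assms
proof (induction I rule: finite_induct)
  case empty
  show ?case
    using is_mpoly_monomial[of n "\<lambda>_. 0"] by simp
next
  case (insert a I)
  then show ?case
    by (simp add: is_mpoly_mult)
qed

lemma is_mpoly_poly_var:
  assumes "i < n"
  shows "is_mpoly n (\<lambda>z. poly p (z i))"
proof -
  have "(\<Prod>j<n. z j ^ (if j = i then k else 0)) = (\<Prod>j<n. if j = i then z j ^ k else 1)"
    for z :: "nat \<Rightarrow> real" and k
    by (rule prod.cong) auto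
  then have "z i ^ k = (\<Prod>j<n. z j ^ (if j = i then k else 0))" for z :: "nat \<Rightarrow> real" and k
    using assms by simp
  then have "(\<lambda>z. poly p (z i)) = (\<lambda>z. \<Sum>k\<le>degree p. coeff p k * (\<Prod>j<n. z j ^ (if j = i then k else 0)))"
    by (simp add: poly_altdef)
  then show ?thesis
    by (simp only:) (intro is_mpoly_sum is_mpoly_cmult is_mpoly_monomial; simp)
qed

lemma is_mpoly_permute:
  assumes "is_mpoly n F" and p: "p permutes {..<n}"
  shows "is_mpoly n (\<lambda>z. F (z \<circ> p))"
proof -
  obtain S Q where S: "finite S" and F: "F = (\<lambda>z. \<Sum>e\<in>S. Q e * (\<Prod>i<n. z i ^ (e ! i)))"
    by (rule is_mpoly_expand[OF assms(1)])
  have "(\<Prod>i<n. z (p i) ^ (e ! i)) = (\<Prod>i<n. z i ^ (e ! inv p i))" for z :: "nat \<Rightarrow> real" and e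
    using prod.permute[OF p, of "\<lambda>i. z i ^ (e ! inv p i)"] permutes_inverses(2)[OF p] by (simp add: o_def)
  then have "(\<lambda>z. F (z \<circ> p)) = (\<lambda>z. \<Sum>e\<in>S. Q e * (\<Prod>i<n. z i ^ (e ! inv p i)))"
    by (simp add: F)
  then show ?thesis
    using S by (simp only:) (intro is_mpoly_sum is_mpoly_cmult is_mpoly_monomial)
qed

text \<open>The average of \<open>F\<close> over all permutations of the variables is symmetric everywhere and agrees
  with \<open>F\<close> wherever \<open>F\<close> is already symmetric.\<close>

lemma symmetrize_mpoly:
  assumes "is_mpoly n F" and sym: "\<And>z p. z \<in> U \<Longrightarrow> p permutes {..<n} \<Longrightarrow> F (z \<circ> p) = F z"
  obtains Q where "finite {e. length e = n \<and> Q e \<noteq> 0}"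
    and "\<And>z. z \<in> U \<Longrightarrow> mpoly_eval Q n z = F z"
    and "\<And>z p. p permutes {..<n} \<Longrightarrow> mpoly_eval Q n (z \<circ> p) = mpoly_eval Q n z"
proof -
  define P where "P = {p. p permutes {..<n}}"
  have P: "finite P" "card P = fact n"
    by (simp_all add: P_def finite_permutations card_permutations)
  define G where "G z = inverse (fact n) * (\<Sum>p\<in>P. F (z \<circ> p))" for z
  have "is_mpoly n G"
    unfolding G_def[abs_def] using P(1) assms(1)
    by (intro is_mpoly_cmult is_mpoly_sum is_mpoly_permute) (auto simp: P_def)
  then obtain Q where Q: "finite {e. length e = n \<and> Q e \<noteq> 0}" "G = mpoly_eval Q n"
    unfolding is_mpoly_def by blast
  show ?thesis
  proof (rule that[OF Q(1)])
    show "mpoly_eval Q n z = F z" if "z \<in> U" for z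
      using sym[OF that] P by (simp add: Q(2)[symmetric] G_def P_def)
    show "mpoly_eval Q n (z \<circ> p) = mpoly_eval Q n z" if "p permutes {..<n}" for z p
      using setum_permutations_compose_left[OF that, of "\<lambda>q. F (z \<circ> q)"]
      by (simp add: Q(2)[symmetric] G_def P_def o_assoc)
  qed
qed

lemma symmetric_mpoly_quotient:
  fixes R :: "(nat \<Rightarrow> real) \<Rightarrow> real"
  assumes Num: "is_mpoly n Num"
    and R: "\<And>z. z \<in> U \<Longrightarrow> R z = Num z / (\<Prod>i<n. (z i - c) ^ N)"
    and U: "\<And>z. z \<in> U \<Longrightarrow> \<forall>i<n. z i \<noteq> c"
    and sym: "\<And>z p. z \<in> U \<Longrightarrow> p permutes {..<n} \<Longrightarrow> z \<circ> p \<in> U \<and> R (z \<circ> p) = R z"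
  obtains Q where "finite {e. length e = n \<and> Q e \<noteq> 0}"
    and "\<And>z. z \<in> U \<Longrightarrow> R z = mpoly_eval Q n z / (\<Prod>i<n. (z i - c) ^ N)"
    and "\<And>z p. p permutes {..<n} \<Longrightarrow>
      mpoly_eval Q n (z \<circ> p) / (\<Prod>i<n. ((z \<circ> p) i - c) ^ N) = mpoly_eval Q n z / (\<Prod>i<n. (z i - c) ^ N)"
proof -
  have denom_permute: "(\<Prod>i<n. ((z \<circ> p) i - c) ^ N) = (\<Prod>i<n. (z i - c) ^ N)"
    if "p permutes {..<n}" for z :: "nat \<Rightarrow> real" and p
    using prod.permute[OF that, of "\<lambda>i. (z i - c) ^ N"] by (simp add: o_def)
  have "Num (z \<circ> p) = Num z" if "z \<in> U" "p permutes {..<n}" for z p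
  proof -
    have "Num (z \<circ> p) / (\<Prod>i<n. (z i - c) ^ N) = R (z \<circ> p)"
      using R[of "z \<circ> p"] sym[OF that] denom_permute[OF that(2)] by simp
    also have "\<dots> = Num z / (\<Prod>i<n. (z i - c) ^ N)"
      using R[OF that(1)] sym[OF that] by simp
    finally show ?thesis
      using U[OF that(1)] by simp
  qed
  then obtain Q where Q: "finite {e. length e = n \<and> Q e \<noteq> 0}" "\<And>z. z \<in> U \<Longrightarrow> mpoly_eval Q n z = Num z"
    and Q_sym: "\<And>z p. p permutes {..<n} \<Longrightarrow> mpoly_eval Q n (z \<circ> p) = mpoly_eval Q n z"
    using symmetrize_mpoly[OF Num] by blast
  show ?thesis
  proof (rule that[OF Q(1)])
    show "R z = mpoly_eval Q n z / (\<Prod>i<n. (z i - c) ^ N)" if "z \<in> U" for z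
      using R[OF that] Q(2)[OF that] by simp
    show "mpoly_eval Q n (z \<circ> p) / (\<Prod>i<n. ((z \<circ> p) i - c) ^ N) = mpoly_eval Q n z / (\<Prod>i<n. (z i - c) ^ N)"
      if "p permutes {..<n}" for z p
      using Q_sym[OF that] denom_permute[OF that] by simp
  qed
qed

lemma sum_prod_f_aux_rational:
  fixes C :: "nat list \<Rightarrow> real"
  assumes S: "finite S" "S \<subseteq> {a. length a = n}"
  obtains N Num where "is_mpoly n Num"
    and "\<And>z. \<forall>i<n. z i \<noteq> 2 \<Longrightarrow>
      (\<Sum>a\<in>S. C a * (\<Prod>i<n. f_aux (a ! i) (z i))) = Num z / (\<Prod>i<n. (z i - 2) ^ N)"
proof -
  define N where "N = 2 * (\<Sum>a\<in>S. sum_list a) + 1"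
  have N: "2 * (a ! i) + 1 \<le> N" if "a \<in> S" "i < n" for a i
  proof -
    have "a ! i \<le> sum_list a"
      using that S(2) elem_le_sum_list[of i a] by auto
    also have "\<dots> \<le> (\<Sum>a\<in>S. sum_list a)"
      using that(1) S(1) by (intro member_le_sum) auto
    finally show ?thesis
      by (simp add: N_def)
  qed
  have "\<forall>k. \<exists>q. 2 * k + 1 \<le> N \<longrightarrow> (\<forall>z. z \<noteq> 2 \<longrightarrow> f_aux k z = poly q z / (z - 2) ^ N)"
    using f_aux_common_denominator by blast
  then obtain q where q: "\<And>k z. 2 * k + 1 \<le> N \<Longrightarrow> z \<noteq> 2 \<Longrightarrow> f_aux k z = poly (q k) z / (z - 2) ^ N"
    by metis
  define Num where "Num z = (\<Sum>a\<in>S. C a * (\<Prod>i<n. poly (q (a ! i)) (z i)))" for z :: "nat \<Rightarrow> real"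
  show ?thesis
  proof
    show "is_mpoly n Num"
      unfolding Num_def[abs_def] using S(1)
      by (intro is_mpoly_sum is_mpoly_cmult is_mpoly_prod is_mpoly_poly_var) auto
    fix z :: "nat \<Rightarrow> real" assume z: "\<forall>i<n. z i \<noteq> 2"
    have "(\<Sum>a\<in>S. C a * (\<Prod>i<n. f_aux (a ! i) (z i)))
        = (\<Sum>a\<in>S. C a * (\<Prod>i<n. poly (q (a ! i)) (z i) / (z i - 2) ^ N))"
      using q N z by (intro sum.cong refl arg_cong2[where f = "(*)"] prod.cong) auto
    also have "\<dots> = Num z / (\<Prod>i<n. (z i - 2) ^ N)"
      by (simp add: Num_def prod_dividef sum_divide_distrib)
    finally show "(\<Sum>a\<in>S. C a * (\<Prod>i<n. f_aux (a ! i) (z i))) = Num z / (\<Prod>i<n. (z i - 2) ^ N)" .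
  qed
qed

lemma sum_prod_f_aux_permute:
  fixes C :: "nat list \<Rightarrow> real"
  assumes C_fin: "finite {a. length a = n \<and> C a \<noteq> 0}"
    and poly: "\<forall>mu\<in>comps n. mono_hurwitz g mu =
        (\<Prod>i<n. real ((2 * (mu ! i)) choose (mu ! i))) *
        (\<Sum>a\<in>{a. length a = n \<and> C a \<noteq> 0}. C a * (\<Prod>i<n. real (mu ! i) ^ (a ! i)))"
    and z: "\<forall>i<n. z i \<in> z_domain" and p: "p permutes {..<n}"
  shows "(\<Sum>a\<in>{a. length a = n \<and> C a \<noteq> 0}. C a * (\<Prod>i<n. f_aux (a ! i) ((z \<circ> p) i)))
    = (\<Sum>a\<in>{a. length a = n \<and> C a \<noteq> 0}. C a * (\<Prod>i<n. f_aux (a ! i) (z i)))"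
proof -
  have "\<forall>i<n. (z \<circ> p) i \<in> z_domain"
    using z permutes_in_image[OF p] by simp
  note at_zp = has_sum_central_binomial_polynomial[OF C_fin poly this]
  have "mono_hurwitz g (permute_list p mu) = mono_hurwitz g mu" if "mu \<in> comps n" for mu
    using that p by (intro mono_hurwitz_permute_list) (simp add: comps_def)
  from has_sum_permute_variables[OF p this has_sum_central_binomial_polynomial[OF C_fin poly z]]
  have "((\<lambda>mu. mono_hurwitz g mu * (\<Prod>i<n. x_of_z ((z \<circ> p) i) ^ (mu ! i))) has_sum
      (\<Sum>a\<in>{a. length a = n \<and> C a \<noteq> 0}. C a * (\<Prod>i<n. f_aux (a ! i) (z i)))) (comps n)"
    by (simp add: o_def)
  with at_zp show ?thesis
    by (rule has_sum_unique)
qed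

theorem corollary2p9:
  fixes g n :: nat and C :: "nat list \<Rightarrow> real"
  assumes n_pos: "1 \<le> n"
    and not01: "(g, n) \<noteq> (0, 1)" and not02: "(g, n) \<noteq> (0, 2)"
    and C_fin: "finite {a. length a = n \<and> C a \<noteq> 0}"
    and poly: "\<forall>mu\<in>comps n. mono_hurwitz g mu =
        (\<Prod>i<n. real ((2 * (mu ! i)) choose (mu ! i))) *
        (\<Sum>a\<in>{a. length a = n \<and> C a \<noteq> 0}. C a * (\<Prod>i<n. real (mu ! i) ^ (a ! i)))"
  shows "(\<forall>z :: nat \<Rightarrow> real. (\<forall>i<n. 2 / (1 + sqrt 2) < z i \<and> z i < 2) \<longrightarrow>
            ((\<lambda>mu. mono_hurwitz g mu * (\<Prod>i<n. x_of_z (z i) ^ (mu ! i))) has_sum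
              (\<Sum>a\<in>{a. length a = n \<and> C a \<noteq> 0}. C a * (\<Prod>i<n. f_aux (a ! i) (z i)))) (comps n))
       \<and> (\<exists>(N::nat) (Q :: nat list \<Rightarrow> real). finite {e. length e = n \<and> Q e \<noteq> 0} \<and>
            (\<forall>z :: nat \<Rightarrow> real. (\<forall>i<n. 2 / (1 + sqrt 2) < z i \<and> z i < 2) \<longrightarrow>
               (\<Sum>a\<in>{a. length a = n \<and> C a \<noteq> 0}. C a * (\<Prod>i<n. f_aux (a ! i) (z i)))
                 = mpoly_eval Q n z / (\<Prod>i<n. (z i - 2) ^ N)) \<and>
            (\<forall>(p :: nat \<Rightarrow> nat) (z :: nat \<Rightarrow> real). p permutes {..<n} \<and> (\<forall>i<n. z i \<noteq> 2) \<longrightarrow>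
               mpoly_eval Q n (z \<circ> p) / (\<Prod>i<n. ((z \<circ> p) i - 2) ^ N)
                 = mpoly_eval Q n z / (\<Prod>i<n. (z i - 2) ^ N)))"
proof -
  \<comment> \<open>\<open>n_pos\<close>, \<open>not01\<close> and \<open>not02\<close> are the conditions under which \<open>poly\<close> is known to hold;
    the argument itself only needs \<open>poly\<close>.\<close>
  define S where "S = {a. length a = n \<and> C a \<noteq> 0}"
  define R where "R z = (\<Sum>a\<in>S. C a * (\<Prod>i<n. f_aux (a ! i) (z i)))" for z :: "nat \<Rightarrow> real"
  define U where "U = {z. \<forall>i<n. z i \<in> z_domain}"
  have U_ne_2: "\<forall>i<n. z i \<noteq> 2" if "z \<in> U" for z
    using that z_domain_bounds(3) by (fastforce simp: U_def)
  obtain N Num where Num: "is_mpoly n Num"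
    and R: "\<And>z. \<forall>i<n. z i \<noteq> 2 \<Longrightarrow> R z = Num z / (\<Prod>i<n. (z i - 2) ^ N)"
    using sum_prod_f_aux_rational[of S n C] C_fin unfolding S_def R_def by blast
  have sym: "z \<circ> p \<in> U \<and> R (z \<circ> p) = R z" if "z \<in> U" "p permutes {..<n}" for z p
    using that permutes_in_image[OF that(2)] sum_prod_f_aux_permute[OF C_fin poly _ that(2)]
    unfolding U_def R_def S_def by simp
  obtain Q where Q: "finite {e. length e = n \<and> Q e \<noteq> 0}"
    "\<And>z. z \<in> U \<Longrightarrow> R z = mpoly_eval Q n z / (\<Prod>i<n. (z i - 2) ^ N)"
    "\<And>z p. p permutes {..<n} \<Longrightarrow>
      mpoly_eval Q n (z \<circ> p) / (\<Prod>i<n. ((z \<circ> p) i - 2) ^ N) = mpoly_eval Q n z / (\<Prod>i<n. (z i - 2) ^ N)"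
    using symmetric_mpoly_quotient[OF Num R[OF U_ne_2] U_ne_2 sym] by blast
  have U: "z \<in> U" if "\<forall>i<n. 2 / (1 + sqrt 2) < z i \<and> z i < 2" for z
    using that by (simp add: U_def z_domain_iff)
  show ?thesis
  proof (intro conjI allI impI exI)
    show "((\<lambda>mu. mono_hurwitz g mu * (\<Prod>i<n. x_of_z (z i) ^ (mu ! i))) has_sum
        (\<Sum>a\<in>{a. length a = n \<and> C a \<noteq> 0}. C a * (\<Prod>i<n. f_aux (a ! i) (z i)))) (comps n)"
      if "\<forall>i<n. 2 / (1 + sqrt 2) < z i \<and> z i < 2" for z
      using has_sum_central_binomial_polynomial[OF C_fin poly] U[OF that] by (simp add: U_def)
    show "(\<Sum>a\<in>{a. length a = n \<and> C a \<noteq> 0}. C a * (\<Prod>i<n. f_aux (a ! i) (z i)))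
        = mpoly_eval Q n z / (\<Prod>i<n. (z i - 2) ^ N)"
      if "\<forall>i<n. 2 / (1 + sqrt 2) < z i \<and> z i < 2" for z
      using Q(2)[OF U[OF that]] by (simp add: R_def S_def)
  qed (use Q in auto)
qed

end
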